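(* Let $X_1,X_2,\dots,X_K$ be identically distributed, unbounded, $m$-dependent random variables (with $m$ fixed) having an exponentially-dominated tail. Let $(M_K)$ be positive integers with $M_K\to\infty$ and $M_K/\ln^{\mu}K\to0$ for some $\mu<1$. Then $X_{(K-M_K+1)}/X_{(K)}\to1$ in probability as $K\to\infty$.
   Context: $X_{(j)}$ denotes the $j$-th smallest of $X_1,\dots,X_K$. A sequence is $m$-dependent if for every $s$ the families $(X_k)_{k\le s}$ and $(X_k)_{k>s+m}$ are independent. Exponentially-dominated tail: a random variable $X$ with continuous CDF $F_X$ has an exponentially-dominated tail if there exist $\alpha>0,\beta\in\mathbb R,\lambda>0,\gamma>0$ with $\lim_{x\to\infty}\frac{1-F_X(x)}{\alpha x^{\beta}e^{-\lambda x^{\gamma}}}=1$. *)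

theory Defs
  imports "HOL-Probability.Probability"
begin

definition order_stat :: "(nat \<Rightarrow> real) \<Rightarrow> nat \<Rightarrow> nat \<Rightarrow> real" where
  "order_stat x K j = sort (map x [1..<Suc K]) ! (j - 1)"

definition gen_sigma :: "'a measure \<Rightarrow> (nat \<Rightarrow> 'a \<Rightarrow> real) \<Rightarrow> nat set \<Rightarrow> 'a set set" where
  "gen_sigma M X I = sigma_sets (space M) (\<Union>k\<in>I. {X k -` A \<inter> space M | A. A \<in> sets borel})"

definition m_dependent :: "'a measure \<Rightarrow> nat \<Rightarrow> (nat \<Rightarrow> 'a \<Rightarrow> real) \<Rightarrow> bool" where
  "m_dependent M m X \<longleftrightarrow>
     (\<forall>s. prob_space.indep_set M (gen_sigma M X {1..s}) (gen_sigma M X {s + m <..}))"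

definition exp_dominated_tail :: "(real \<Rightarrow> real) \<Rightarrow> bool" where
  "exp_dominated_tail F \<longleftrightarrow>
     (\<exists>\<alpha> \<beta> lam \<gamma>. \<alpha> > 0 \<and> lam > 0 \<and> \<gamma> > 0 \<and>
        ((\<lambda>x. (1 - F x) / (\<alpha> * x powr \<beta> * exp (- lam * x powr \<gamma>))) \<longlongrightarrow> 1) at_top)"

end

theory Submission
  imports Defs "HOL-Real_Asymp.Real_Asymp"
begin

text \<open>
  Fix \<open>\<epsilon>\<close> and choose levels \<open>a\<^sub>K\<close> and \<open>b\<^sub>K = (1 - \<epsilon>) a\<^sub>K\<close> (for \<open>\<epsilon> < 1\<close>) at which the tail
  \<open>P(X > x)\<close> is of order \<open>K\<^sup>-\<^sup>c\<close> with \<open>c > 1\<close> and \<open>c < 1\<close> respectively; this is possible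
  because the tail is \<open>exp (- \<lambda> x\<^sup>\<gamma>)\<close> up to polynomial factors. If the ratio
  \<open>X\<^sub>(\<^sub>K\<^sub>-\<^sub>M\<^sub>+\<^sub>1\<^sub>) / X\<^sub>(\<^sub>K\<^sub>)\<close> is off by more than \<open>\<epsilon>\<close>, then some \<open>X\<^sub>i\<close> exceeds \<open>a\<^sub>K\<close>, or
  fewer than \<open>M\<^sub>K\<close> of the \<open>X\<^sub>i\<close> exceed \<open>b\<^sub>K\<close>. The union bound gives \<open>K P(X > a\<^sub>K) \<rightarrow> 0\<close>
  for the first event. The number of exceedances of \<open>b\<^sub>K\<close> has mean \<open>K P(X > b\<^sub>K)\<close>, which
  grows like a power of \<open>K\<close> and hence eventually dominates \<open>2 M\<^sub>K\<close>; by \<open>m\<close>-dependence its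
  variance is at most \<open>2m + 1\<close> times its mean, so Chebyshev's inequality bounds the second
  event by \<open>2 (2m + 1) / M\<^sub>K \<rightarrow> 0\<close>.
\<close>

section \<open>Order statistics\<close>

lemma order_stat_mono:
  assumes "1 \<le> i" "i \<le> j" "j \<le> K"
  shows "order_stat x K i \<le> order_stat x K j"
  unfolding order_stat_def using assms by (intro sorted_nth_mono[OF sorted_sort]) auto

lemma order_stat_max_le:
  assumes "1 \<le> K" "\<And>i. i \<in> {1..K} \<Longrightarrow> x i \<le> a"
  shows "order_stat x K K \<le> a"
proof -
  have "order_stat x K K \<in> set (sort (map x [1..<Suc K]))"
    unfolding order_stat_def using assms(1) by (intro nth_mem) simp
  then show ?thesis using assms(2) by auto
qed

lemma order_stat_gt_if_card_exceeding:
  fixes x :: "nat \<Rightarrow> real"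
  assumes "1 \<le> n" "n \<le> K" "n \<le> card {i\<in>{1..K}. b < x i}"
  shows "b < order_stat x K (K - n + 1)"
proof (rule ccontr)
  assume "\<not> b < order_stat x K (K - n + 1)"
  then have os_le: "order_stat x K (K - n + 1) \<le> b" by simp
  define s where "s = sort (map x [1..<Suc K])"
  have "length (filter ((<) b) s) = card {i\<in>{1..K}. b < x i}"
  proof -
    have "length (filter ((<) b) s) = length (filter ((<) b \<circ> x) [1..<Suc K])"
      unfolding s_def by (metis filter_map length_map mset_filter mset_sort size_mset)
    also have "\<dots> = card {i\<in>{1..K}. b < x i}"
      by (subst distinct_length_filter) (auto intro!: arg_cong[where f=card])
    finally show ?thesis .
  qed
  moreover have "filter ((<) b) (take (K - n + 1) s) = []"
  proof -
    have "v \<le> b" if v: "v \<in> set (take (K - n + 1) s)" for v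
    proof -
      obtain j where "j < length (take (K - n + 1) s)" "v = take (K - n + 1) s ! j"
        using v by (auto simp: in_set_conv_nth)
      moreover have "length s = K" unfolding s_def by simp
      ultimately have "j \<le> K - n" "v = s ! j" by auto
      then have "v \<le> s ! (K - n)"
        using assms unfolding s_def by (auto intro: sorted_nth_mono)
      then show ?thesis using os_le unfolding s_def order_stat_def by simp
    qed
    then show ?thesis by (force simp: filter_empty_conv)
  qed
  then have "length (filter ((<) b) s) \<le> length (drop (K - n + 1) s)"
    by (metis append_take_drop_id filter_append length_filter_le self_append_conv2)
  moreover have "length (drop (K - n + 1) s) = n - 1"
    using assms unfolding s_def by simp
  ultimately show False using assms(1,3) by linarith
qed

lemma order_stat_ratio_close:
  fixes x :: "nat \<Rightarrow> real"
  assumes "1 \<le> n" "n \<le> K" "0 < b" "\<And>i. i \<in> {1..K} \<Longrightarrow> x i \<le> a"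
    and "n \<le> card {i\<in>{1..K}. b < x i}"
  shows "\<bar>order_stat x K (K - n + 1) / order_stat x K K - 1\<bar> \<le> 1 - b / a"
proof -
  define y z where "y = order_stat x K (K - n + 1)" and "z = order_stat x K K"
  have "b < y" unfolding y_def using assms by (intro order_stat_gt_if_card_exceeding)
  moreover have "y \<le> z" unfolding y_def z_def using assms by (intro order_stat_mono) auto
  moreover have "z \<le> a" unfolding z_def using assms by (intro order_stat_max_le) auto
  ultimately have "b / a \<le> y / z" "y / z \<le> 1"
    using assms(3) by (auto intro: frac_le)
  then show ?thesis unfolding y_def z_def by linarith
qed

section \<open>Exponentially dominated tails\<close>

lemma eventually_ratio_tendsto_1_bounds:
  fixes f g :: "'b \<Rightarrow> real"
  assumes "((\<lambda>x. f x / g x) \<longlongrightarrow> 1) F" "eventually (\<lambda>x. 0 < g x) F"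
  shows "eventually (\<lambda>x. g x / 2 \<le> f x \<and> f x \<le> 2 * g x) F"
proof -
  have "eventually (\<lambda>x. 1 / 2 < f x / g x) F" "eventually (\<lambda>x. f x / g x < 2) F"
    by (rule order_tendstoD[OF assms(1)], simp)+
  with assms(2) show ?thesis
    by eventually_elim (simp add: field_simps)
qed

lemma tendsto_divide_0_trans:
  fixes f g h :: "'b \<Rightarrow> real"
  assumes "((\<lambda>x. f x / g x) \<longlongrightarrow> 0) F" "((\<lambda>x. g x / h x) \<longlongrightarrow> 0) F" "eventually (\<lambda>x. g x \<noteq> 0) F"
  shows "((\<lambda>x. f x / h x) \<longlongrightarrow> 0) F"
proof (rule Lim_transform_eventually)
  show "((\<lambda>x. f x / g x * (g x / h x)) \<longlongrightarrow> 0) F"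
    using tendsto_mult[OF assms(1,2)] by simp
  show "eventually (\<lambda>x. f x / g x * (g x / h x) = f x / h x) F"
    using assms(3) by eventually_elim simp
qed

text \<open>The level \<open>x\<close> at which \<open>exp (- lam x\<^sup>\<gamma>) = K\<^sup>-\<^sup>c\<close>.\<close>

definition tail_threshold :: "real \<Rightarrow> real \<Rightarrow> real \<Rightarrow> nat \<Rightarrow> real" where
  "tail_threshold lam \<gamma> c K = (c * ln (real K) / lam) powr (1 / \<gamma>)"

lemma tail_threshold_scale:
  assumes "0 \<le> r" "0 \<le> c" "0 < lam" "1 \<le> K"
  shows "tail_threshold lam \<gamma> (r * c) K = r powr (1 / \<gamma>) * tail_threshold lam \<gamma> c K"
  unfolding tail_threshold_def using assms by (simp add: powr_mult[symmetric] mult.assoc)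

lemma tail_threshold_pos:
  assumes "0 < c" "0 < lam" "2 \<le> K"
  shows "0 < tail_threshold lam \<gamma> c K"
  unfolding tail_threshold_def using assms by simp

lemma filterlim_tail_threshold:
  assumes "0 < c" "0 < lam" "0 < \<gamma>"
  shows "filterlim (tail_threshold lam \<gamma> c) at_top sequentially"
proof -
  have "filterlim (\<lambda>x::real. (c * ln x / lam) powr (1 / \<gamma>)) at_top at_top"
    using assms by real_asymp
  then show ?thesis
    unfolding tail_threshold_def using filterlim_compose[OF _ filterlim_real_sequentially] by blast
qed

locale exp_tail =
  fixes G :: "real \<Rightarrow> real" and \<alpha> \<beta> lam \<gamma> :: real
  assumes params: "0 < \<alpha>" "0 < lam" "0 < \<gamma>"
    and tail: "((\<lambda>x. G x / (\<alpha> * x powr \<beta> * exp (- lam * x powr \<gamma>))) \<longlongrightarrow> 1) at_top"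
begin

definition tail_level :: "real \<Rightarrow> nat \<Rightarrow> real" where
  "tail_level c K = \<alpha> * (c * ln (real K) / lam) powr (\<beta> / \<gamma>) * real K powr (- c)"

lemma tail_profile_at_tail_threshold:
  assumes "0 < c" "2 \<le> K"
  defines "x \<equiv> tail_threshold lam \<gamma> c K"
  shows "\<alpha> * x powr \<beta> * exp (- lam * x powr \<gamma>) = tail_level c K"
proof -
  have "0 < c * ln (real K) / lam"
    using assms params by simp
  then have "x powr \<beta> = (c * ln (real K) / lam) powr (\<beta> / \<gamma>)" "x powr \<gamma> = c * ln (real K) / lam"
    unfolding x_def tail_threshold_def using assms params by (simp_all add: powr_powr)
  moreover have "exp (- lam * (c * ln (real K) / lam)) = real K powr (- c)"
    using assms params by (simp add: powr_def)
  ultimately show ?thesis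
    unfolding tail_level_def by simp
qed

lemma tail_at_tail_threshold_bounds:
  assumes "0 < c"
  shows "eventually (\<lambda>K. tail_level c K / 2 \<le> G (tail_threshold lam \<gamma> c K)
                         \<and> G (tail_threshold lam \<gamma> c K) \<le> 2 * tail_level c K) sequentially"
proof -
  define h where "h x = \<alpha> * x powr \<beta> * exp (- lam * x powr \<gamma>)" for x
  have "eventually (\<lambda>x. h x / 2 \<le> G x \<and> G x \<le> 2 * h x) at_top"
  proof (rule eventually_ratio_tendsto_1_bounds)
    show "((\<lambda>x. G x / h x) \<longlongrightarrow> 1) at_top"
      using tail unfolding h_def .
    show "eventually (\<lambda>x. 0 < h x) at_top"
      using eventually_gt_at_top[of 0] by eventually_elim (use params in \<open>simp add: h_def\<close>)
  qed
  then have "eventually (\<lambda>K. h (tail_threshold lam \<gamma> c K) / 2 \<le> G (tail_threshold lam \<gamma> c K)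
                         \<and> G (tail_threshold lam \<gamma> c K) \<le> 2 * h (tail_threshold lam \<gamma> c K)) sequentially"
    using filterlim_tail_threshold[OF assms(1) params(2,3)] unfolding filterlim_iff by blast
  moreover have "eventually (\<lambda>K. h (tail_threshold lam \<gamma> c K) = tail_level c K) sequentially"
    using eventually_ge_at_top[of 2] unfolding h_def
    by eventually_elim (rule tail_profile_at_tail_threshold[OF assms(1)])
  ultimately show ?thesis
    by eventually_elim simp
qed

lemma tendsto_real_mult_tail_at_tail_threshold:
  assumes "1 < c"
  shows "((\<lambda>K. real K * G (tail_threshold lam \<gamma> c K)) \<longlongrightarrow> 0) sequentially"
proof -
  have bounds: "eventually (\<lambda>K. tail_level c K / 2 \<le> G (tail_threshold lam \<gamma> c K)
                              \<and> G (tail_threshold lam \<gamma> c K) \<le> 2 * tail_level c K) sequentially"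
    using assms by (intro tail_at_tail_threshold_bounds) simp
  have "((\<lambda>x. x * (2 * (\<alpha> * (c * ln x / lam) powr (\<beta> / \<gamma>) * x powr (- c)))) \<longlongrightarrow> 0) at_top"
    using assms params by real_asymp
  then have lim: "((\<lambda>K. real K * (2 * tail_level c K)) \<longlongrightarrow> 0) sequentially"
    unfolding tail_level_def by (rule filterlim_compose[OF _ filterlim_real_sequentially])
  have level_nonneg: "0 \<le> tail_level c K" for K
    unfolding tail_level_def using params by simp
  show ?thesis
  proof (rule tendsto_sandwich[OF _ _ tendsto_const lim])
    show "eventually (\<lambda>K. 0 \<le> real K * G (tail_threshold lam \<gamma> c K)) sequentially"
      using bounds by eventually_elim (use level_nonneg in \<open>auto intro: order.trans[rotated]\<close>)
    show "eventually (\<lambda>K. real K * G (tail_threshold lam \<gamma> c K) \<le> real K * (2 * tail_level c K))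
            sequentially"
      using bounds by eventually_elim (simp add: mult_left_mono)
  qed
qed

lemma tendsto_ln_powr_div_tail_at_tail_threshold:
  assumes "0 < c" "c < 1"
  shows "((\<lambda>K. ln (real K) powr \<mu> / (real K * G (tail_threshold lam \<gamma> c K))) \<longlongrightarrow> 0) sequentially"
proof -
  have bounds: "eventually (\<lambda>K. tail_level c K / 2 \<le> G (tail_threshold lam \<gamma> c K)) sequentially"
    using tail_at_tail_threshold_bounds[OF assms(1)] by (auto elim: eventually_mono)
  have "((\<lambda>x. ln x powr \<mu> / (x * (\<alpha> * (c * ln x / lam) powr (\<beta> / \<gamma>) * x powr (- c) / 2))) \<longlongrightarrow> 0) at_top"
    using assms params by real_asymp
  then have lim: "((\<lambda>K. ln (real K) powr \<mu> / (real K * (tail_level c K / 2))) \<longlongrightarrow> 0) sequentially"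
    unfolding tail_level_def by (rule filterlim_compose[OF _ filterlim_real_sequentially])
  have level_pos: "eventually (\<lambda>K. 0 < tail_level c K) sequentially"
    using eventually_ge_at_top[of 2] unfolding tail_level_def
    by eventually_elim (use assms params in simp)
  show ?thesis
  proof (rule tendsto_sandwich[OF _ _ tendsto_const lim])
    show "eventually (\<lambda>K. 0 \<le> ln (real K) powr \<mu> / (real K * G (tail_threshold lam \<gamma> c K))) sequentially"
      using bounds level_pos by eventually_elim simp
    show "eventually (\<lambda>K. ln (real K) powr \<mu> / (real K * G (tail_threshold lam \<gamma> c K))
                          \<le> ln (real K) powr \<mu> / (real K * (tail_level c K / 2))) sequentially"
      using bounds level_pos eventually_ge_at_top[of 1]
      by eventually_elim (intro divide_left_mono mult_left_mono mult_pos_pos; simp)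
  qed
qed

end

lemma exp_dominated_tail_thresholds:
  assumes "exp_dominated_tail F" "0 < e" "e < 1"
  obtains a b :: "nat \<Rightarrow> real"
  where "\<And>K. 2 \<le> K \<Longrightarrow> 0 < b K \<and> b K / a K = 1 - e"
    and "((\<lambda>K. real K * (1 - F (a K))) \<longlongrightarrow> 0) sequentially"
    and "\<And>\<mu>. ((\<lambda>K. ln (real K) powr \<mu> / (real K * (1 - F (b K)))) \<longlongrightarrow> 0) sequentially"
proof -
  obtain \<alpha> \<beta> lam \<gamma> where "exp_tail (\<lambda>x. 1 - F x) \<alpha> \<beta> lam \<gamma>"
    using assms(1) unfolding exp_dominated_tail_def exp_tail_def by blast
  then interpret exp_tail "\<lambda>x. 1 - F x" \<alpha> \<beta> lam \<gamma> .
  txt \<open>Take \<open>a = tail_threshold lam \<gamma> c\<close> and \<open>b = tail_threshold lam \<gamma> (r c)\<close> with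
    \<open>r c < 1 < c\<close>; then \<open>b / a = r powr (1 / \<gamma>) = 1 - e\<close>.\<close>
  define r where "r = (1 - e) powr \<gamma>"
  have r: "0 < r" "r < 1"
    unfolding r_def using assms params powr_less_mono2[of \<gamma> "1 - e" 1] by auto
  define c where "c = (1 + r) / (2 * r)"
  have "r * c = (1 + r) / 2"
    unfolding c_def using r by simp
  moreover have "1 < c"
    unfolding c_def using r by (simp add: field_simps)
  ultimately have c: "1 < c" "0 < r * c" "r * c < 1"
    using r by auto
  show ?thesis
  proof
    fix K :: nat assume "2 \<le> K"
    have "r powr (1 / \<gamma>) = 1 - e"
      unfolding r_def using assms params by (simp add: powr_powr)
    then have "tail_threshold lam \<gamma> (r * c) K = (1 - e) * tail_threshold lam \<gamma> c K"
      using \<open>2 \<le> K\<close> c r params by (simp add: tail_threshold_scale)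
    moreover have "0 < tail_threshold lam \<gamma> (r * c) K" "0 < tail_threshold lam \<gamma> c K"
      using \<open>2 \<le> K\<close> c params by (auto intro: tail_threshold_pos)
    ultimately show "0 < tail_threshold lam \<gamma> (r * c) K
               \<and> tail_threshold lam \<gamma> (r * c) K / tail_threshold lam \<gamma> c K = 1 - e"
      by simp
  qed (use c tendsto_real_mult_tail_at_tail_threshold tendsto_ln_powr_div_tail_at_tail_threshold in auto)
qed

section \<open>Exceedance counts of \<open>m\<close>-dependent sequences\<close>

lemma real_card_exceeding_eq_sum_indicator:
  assumes "finite I" "\<omega> \<in> space M"
  shows "real (card {i\<in>I. b < X i \<omega>}) = (\<Sum>i\<in>I. indicator {\<omega>\<in>space M. b < X i \<omega>} \<omega>)"
  using assms by (simp add: indicator_def Int_def conj_commute)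

lemma borel_measurable_card_exceeding:
  fixes X :: "'i \<Rightarrow> 'a \<Rightarrow> real"
  assumes "finite I" "\<And>i. i \<in> I \<Longrightarrow> X i \<in> borel_measurable M"
  shows "(\<lambda>\<omega>. real (card {i\<in>I. b < X i \<omega>})) \<in> borel_measurable M"
proof (rule measurable_cong[THEN iffD2])
  show "(\<lambda>\<omega>. \<Sum>i\<in>I. indicator {\<omega>\<in>space M. b < X i \<omega>} \<omega> :: real) \<in> borel_measurable M"
    using assms(2) by (intro borel_measurable_sum borel_measurable_indicator)
      (auto simp: borel_measurable_iff_greater)
qed (simp add: real_card_exceeding_eq_sum_indicator[OF assms(1)])

context prob_space
begin

lemma variance_sum_indicator:
  assumes "finite I" "A ` I \<subseteq> events"
  shows "variance (\<lambda>\<omega>. \<Sum>i\<in>I. indicator (A i) \<omega> :: real)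
           = (\<Sum>i\<in>I. \<Sum>j\<in>I. prob (A i \<inter> A j) - prob (A i) * prob (A j))"
proof -
  define f where "f i \<omega> = indicator (A i) \<omega> - prob (A i)" for i \<omega>
  have int_Int: "integrable M (indicator (A i \<inter> A j) :: 'a \<Rightarrow> real)" if "i \<in> I" "j \<in> I" for i j
    using assms that by (intro integrable_real_indicator) (auto simp: less_top[symmetric])
  have int_ind: "integrable M (indicator (A i) :: 'a \<Rightarrow> real)" if "i \<in> I" for i
    using assms that by (intro integrable_real_indicator) (auto simp: less_top[symmetric])
  have ff: "f i \<omega> * f j \<omega> = indicator (A i \<inter> A j) \<omega> - prob (A j) * indicator (A i) \<omega>
              - prob (A i) * indicator (A j) \<omega> + prob (A i) * prob (A j)" for i j \<omega>
    unfolding f_def by (simp add: indicator_inter_arith algebra_simps)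
  have int_ff: "integrable M (\<lambda>\<omega>. f i \<omega> * f j \<omega>)" if "i \<in> I" "j \<in> I" for i j
    unfolding ff using int_Int[OF that] int_ind that by auto
  have E_ff: "expectation (\<lambda>\<omega>. f i \<omega> * f j \<omega>) = prob (A i \<inter> A j) - prob (A i) * prob (A j)"
    if "i \<in> I" "j \<in> I" for i j
    unfolding ff using int_Int[OF that] int_ind that assms by (simp add: prob_space)
  have "expectation (\<lambda>\<omega>. \<Sum>i\<in>I. indicator (A i) \<omega> :: real) = (\<Sum>i\<in>I. prob (A i))"
    using int_ind assms by simp
  then have "(\<Sum>i\<in>I. indicator (A i) \<omega> :: real) - expectation (\<lambda>\<omega>. \<Sum>i\<in>I. indicator (A i) \<omega>)
               = (\<Sum>i\<in>I. f i \<omega>)" for \<omega>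
    unfolding f_def by (simp add: sum_subtractf)
  then have "variance (\<lambda>\<omega>. \<Sum>i\<in>I. indicator (A i) \<omega> :: real)
               = expectation (\<lambda>\<omega>. \<Sum>i\<in>I. \<Sum>j\<in>I. f i \<omega> * f j \<omega>)"
    by (simp add: power2_eq_square sum_product)
  also have "\<dots> = (\<Sum>i\<in>I. \<Sum>j\<in>I. expectation (\<lambda>\<omega>. f i \<omega> * f j \<omega>))"
    using int_ff by (simp add: integrable_sum)
  finally show ?thesis using E_ff by simp
qed

lemma variance_sum_indicator_banded_le:
  assumes "\<And>i. i \<in> {1..K} \<Longrightarrow> A i \<in> events" "\<And>i. i \<in> {1..K} \<Longrightarrow> prob (A i) = p"
    and "\<And>i j. i \<in> {1..K} \<Longrightarrow> j \<in> {1..K} \<Longrightarrow> i + m < j \<Longrightarrow> prob (A i \<inter> A j) = p * p"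
  shows "variance (\<lambda>\<omega>. \<Sum>i\<in>{1..K}. indicator (A i) \<omega> :: real) \<le> (2 * real m + 1) * (real K * p)"
proof -
  have p: "0 \<le> p" if "K \<ge> 1" using assms(2)[of 1] that by (metis atLeastAtMost_iff le_refl measure_nonneg)
  have cov_le: "prob (A i \<inter> A j) - p * p \<le> (if i \<le> j + m \<and> j \<le> i + m then p else 0)"
    if ij: "i \<in> {1..K}" "j \<in> {1..K}" for i j
  proof (cases "i \<le> j + m \<and> j \<le> i + m")
    case True
    have "prob (A i \<inter> A j) \<le> prob (A i)" using assms(1) ij by (intro finite_measure_mono) auto
    moreover have "0 \<le> p * p" by simp
    ultimately show ?thesis using assms(2) ij by (simp only: if_P[OF True])
  next
    case False
    then show ?thesis using assms(3)[OF ij] assms(3)[OF ij(2,1)] by (auto simp: Int_commute)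
  qed
  have band: "real (card {j\<in>{1..K}. i \<le> j + m \<and> j \<le> i + m}) \<le> 2 * real m + 1" for i
  proof -
    have "card {j\<in>{1..K}. i \<le> j + m \<and> j \<le> i + m} \<le> card {i - m..i + m}"
      by (intro card_mono) auto
    then have "card {j\<in>{1..K}. i \<le> j + m \<and> j \<le> i + m} \<le> 2 * m + 1" by simp
    then show ?thesis using of_nat_mono[where 'a=real] by fastforce
  qed
  have "variance (\<lambda>\<omega>. \<Sum>i\<in>{1..K}. indicator (A i) \<omega> :: real)
          \<le> (\<Sum>i\<in>{1..K}. \<Sum>j\<in>{1..K}. if i \<le> j + m \<and> j \<le> i + m then p else 0)"
    using assms by (subst variance_sum_indicator) (auto intro!: sum_mono cov_le simp: image_subset_iff)
  also have "\<dots> = (\<Sum>i\<in>{1..K}. card {j\<in>{1..K}. i \<le> j + m \<and> j \<le> i + m} * p)"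
    by (simp add: sum.If_cases Int_def conj_commute)
  also have "\<dots> \<le> (\<Sum>i\<in>{1..K}. (2 * real m + 1) * p)"
    using band p by (intro sum_mono mult_right_mono) auto
  finally show ?thesis by (simp add: algebra_simps)
qed

lemma prob_less_half_expectation_le:
  fixes N :: "'a \<Rightarrow> real"
  assumes "random_variable borel N" "integrable M (\<lambda>\<omega>. N \<omega> ^ 2)" "0 < t" "2 * t \<le> expectation N"
  shows "prob {\<omega>\<in>space M. N \<omega> < t} \<le> 4 * variance N / (expectation N)\<^sup>2"
proof -
  define c where "c = expectation N"
  have "prob {\<omega>\<in>space M. N \<omega> < t} \<le> prob {\<omega>\<in>space M. \<bar>N \<omega> - c\<bar> \<ge> c - t}"
    using assms(1) by (intro finite_measure_mono) (auto simp: c_def)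
  also have "\<dots> \<le> variance N / (c - t)\<^sup>2"
    unfolding c_def using assms by (intro Chebyshev_inequality) auto
  also have "\<dots> \<le> variance N / (c / 2)\<^sup>2"
    using assms variance_positive[of N] unfolding c_def
    by (intro divide_left_mono power_mono mult_pos_pos) auto
  also have "\<dots> = 4 * variance N / c\<^sup>2"
    by (simp add: power_divide)
  finally show ?thesis unfolding c_def .
qed

lemma prob_gt_eq_if_distr_eq:
  fixes X Y :: "'a \<Rightarrow> real"
  assumes "X \<in> borel_measurable M" "Y \<in> borel_measurable M" "distr M borel X = distr M borel Y"
  shows "prob {\<omega>\<in>space M. a < X \<omega>} = prob {\<omega>\<in>space M. a < Y \<omega>}"
proof -
  have "prob {\<omega>\<in>space M. a < Z \<omega>} = measure (distr M borel Z) {a<..}"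
    if "Z \<in> borel_measurable M" for Z :: "'a \<Rightarrow> real"
    using that by (subst measure_distr) (auto simp: vimage_def Int_def conj_commute)
  then show ?thesis using assms by metis
qed

lemma prob_gt_eq_1_minus_prob_le:
  fixes Y :: "'a \<Rightarrow> real"
  assumes "Y \<in> borel_measurable M"
  shows "prob {\<omega>\<in>space M. x < Y \<omega>} = 1 - prob {\<omega>\<in>space M. Y \<omega> \<le> x}"
proof -
  have "{\<omega>\<in>space M. x < Y \<omega>} = space M - {\<omega>\<in>space M. Y \<omega> \<le> x}"
    by auto
  moreover have "{\<omega>\<in>space M. Y \<omega> \<le> x} \<in> events"
    using assms by (simp add: borel_measurable_iff_le)
  ultimately show ?thesis
    using prob_compl by simp
qed
lemma prob_ex_gt_le:
  fixes X :: "'i \<Rightarrow> 'a \<Rightarrow> real"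
  assumes "finite I" "\<And>i. i \<in> I \<Longrightarrow> X i \<in> borel_measurable M"
    and "\<And>i. i \<in> I \<Longrightarrow> prob {\<omega>\<in>space M. a < X i \<omega>} = p"
  shows "prob {\<omega>\<in>space M. \<exists>i\<in>I. a < X i \<omega>} \<le> real (card I) * p"
proof -
  have "{\<omega>\<in>space M. \<exists>i\<in>I. a < X i \<omega>} = (\<Union>i\<in>I. {\<omega>\<in>space M. a < X i \<omega>})"
    by auto
  also have "prob \<dots> \<le> (\<Sum>i\<in>I. prob {\<omega>\<in>space M. a < X i \<omega>})"
  proof (rule finite_measure_subadditive_finite)
    show "(\<lambda>i. {\<omega>\<in>space M. a < X i \<omega>}) ` I \<subseteq> events"
      using assms(2) by (auto simp: borel_measurable_iff_greater)
  qed (use assms(1) in auto)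
  finally show ?thesis using assms(3) by simp
qed

lemma m_dependent_prob_Int:
  assumes "m_dependent M m X" "1 \<le> i" "i + m < j" "A \<in> sets borel" "B \<in> sets borel"
  shows "prob (X i -` A \<inter> space M \<inter> (X j -` B \<inter> space M))
           = prob (X i -` A \<inter> space M) * prob (X j -` B \<inter> space M)"
proof (rule indep_setD)
  show "indep_set (gen_sigma M X {1..i}) (gen_sigma M X {i + m<..})"
    using assms(1) unfolding m_dependent_def by blast
  show "X i -` A \<inter> space M \<in> gen_sigma M X {1..i}"
    unfolding gen_sigma_def using assms(2,4) by (intro sigma_sets.Basic) (auto intro!: bexI[of _ i])
  show "X j -` B \<inter> space M \<in> gen_sigma M X {i + m<..}"
    unfolding gen_sigma_def using assms(3,5) by (intro sigma_sets.Basic) (auto intro!: bexI[of _ j])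
qed

lemma prob_card_exceeding_less_le:
  fixes X :: "nat \<Rightarrow> 'a \<Rightarrow> real"
  assumes meas: "\<And>k. k \<ge> 1 \<Longrightarrow> X k \<in> borel_measurable M"
    and ident: "\<And>k. k \<ge> 1 \<Longrightarrow> distr M borel (X k) = distr M borel (X 1)"
    and mdep: "m_dependent M m X"
    and t: "0 < t" "2 * t \<le> real K * prob {\<omega>\<in>space M. b < X 1 \<omega>}"
  shows "prob {\<omega>\<in>space M. real (card {i\<in>{1..K}. b < X i \<omega>}) < t} \<le> 2 * (2 * real m + 1) / t"
proof -
  define A where "A i = {\<omega>\<in>space M. b < X i \<omega>}" for i
  define p where "p = prob (A 1)"
  define N where "N \<omega> = (\<Sum>i\<in>{1..K}. indicator (A i) \<omega> :: real)" for \<omega>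
  have A_events: "A i \<in> events" if "i \<in> {1..K}" for i
    unfolding A_def using meas[of i] that by (simp add: borel_measurable_iff_greater)
  have prob_A: "prob (A i) = p" if "i \<in> {1..K}" for i
    unfolding p_def A_def using that by (intro prob_gt_eq_if_distr_eq meas ident) auto
  have A_vimage: "A i = X i -` {b<..} \<inter> space M" for i
    unfolding A_def by auto
  have "prob (A i \<inter> A j) = p * p" if "i \<in> {1..K}" "j \<in> {1..K}" "i + m < j" for i j
  proof -
    have "prob (A i \<inter> A j) = prob (A i) * prob (A j)"
      unfolding A_vimage using that by (intro m_dependent_prob_Int[OF mdep]) auto
    then show ?thesis using prob_A that by simp
  qed
  then have var: "variance N \<le> (2 * real m + 1) * (real K * p)"
    unfolding N_def using A_events prob_A by (intro variance_sum_indicator_banded_le) auto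
  have EN: "expectation N = real K * p"
    unfolding N_def using A_events prob_A by (simp add: less_top[symmetric])
  have Kp: "2 * t \<le> real K * p" "0 < real K * p"
    using t unfolding p_def A_def by auto
  have card_N: "real (card {i\<in>{1..K}. b < X i \<omega>}) = N \<omega>" if "\<omega> \<in> space M" for \<omega>
    unfolding N_def A_def using that by (rule real_card_exceeding_eq_sum_indicator[OF finite_atLeastAtMost])
  have "prob {\<omega>\<in>space M. real (card {i\<in>{1..K}. b < X i \<omega>}) < t} = prob {\<omega>\<in>space M. N \<omega> < t}"
    using card_N by (metis (mono_tags, lifting))
  also have "\<dots> \<le> 4 * variance N / (expectation N)\<^sup>2"
  proof (rule prob_less_half_expectation_le)
    show N_meas: "random_variable borel N"
      unfolding N_def using A_events by (intro borel_measurable_sum) auto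
    have "0 \<le> N \<omega> \<and> N \<omega> \<le> real K" for \<omega>
      using sum_mono[of "{1..K}" "\<lambda>i. indicator (A i) \<omega> :: real" "\<lambda>_. 1"]
      unfolding N_def by (auto simp: sum_nonneg indicator_def)
    then show "integrable M (\<lambda>\<omega>. N \<omega> ^ 2)"
      using N_meas by (intro integrable_const_bound[where B="real K ^ 2"]) (auto intro: power_mono)
  qed (use t Kp EN in auto)
  also have "\<dots> \<le> 4 * ((2 * real m + 1) * (real K * p)) / (real K * p)\<^sup>2"
    using var Kp unfolding EN by (intro divide_right_mono) auto
  also have "\<dots> = 4 * (2 * real m + 1) / (real K * p)"
    using Kp by (simp add: power2_eq_square)
  also have "\<dots> \<le> 4 * (2 * real m + 1) / (2 * t)"
    using Kp t by (intro divide_left_mono) auto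
  also have "\<dots> = 2 * (2 * real m + 1) / t"
    using t by (simp add: field_simps)
  finally show ?thesis .
qed

lemma prob_order_stat_ratio_far_le:
  fixes X :: "nat \<Rightarrow> 'a \<Rightarrow> real"
  assumes meas: "\<And>k. k \<ge> 1 \<Longrightarrow> X k \<in> borel_measurable M"
    and ident: "\<And>k. k \<ge> 1 \<Longrightarrow> distr M borel (X k) = distr M borel (X 1)"
    and mdep: "m_dependent M m X"
    and "0 < b" "1 - b / a \<le> \<epsilon>" "1 \<le> n" "2 * real n \<le> real K * prob {\<omega>\<in>space M. b < X 1 \<omega>}"
  shows "prob {\<omega>\<in>space M. \<epsilon> < \<bar>order_stat (\<lambda>k. X k \<omega>) K (K - n + 1) / order_stat (\<lambda>k. X k \<omega>) K K - 1\<bar>}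
           \<le> real K * prob {\<omega>\<in>space M. a < X 1 \<omega>} + 2 * (2 * real m + 1) / real n"
proof -
  define U where "U = {\<omega>\<in>space M. \<exists>i\<in>{1..K}. a < X i \<omega>}"
  define V where "V = {\<omega>\<in>space M. real (card {i\<in>{1..K}. b < X i \<omega>}) < real n}"
  have "real K * prob {\<omega>\<in>space M. b < X 1 \<omega>} \<le> real K"
    by (simp add: mult_left_le)
  then have "n \<le> K"
    using assms(6,7) by linarith
  have "\<omega> \<in> U \<union> V"
    if "\<omega> \<in> space M" "\<epsilon> < \<bar>order_stat (\<lambda>k. X k \<omega>) K (K - n + 1) / order_stat (\<lambda>k. X k \<omega>) K K - 1\<bar>"
    for \<omega>
  proof (rule ccontr)
    assume "\<omega> \<notin> U \<union> V"
    then have "\<And>i. i \<in> {1..K} \<Longrightarrow> X i \<omega> \<le> a" "n \<le> card {i\<in>{1..K}. b < X i \<omega>}"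
      using that(1) unfolding U_def V_def by (auto simp: not_less)
    then have "\<bar>order_stat (\<lambda>k. X k \<omega>) K (K - n + 1) / order_stat (\<lambda>k. X k \<omega>) K K - 1\<bar> \<le> 1 - b / a"
      using \<open>n \<le> K\<close> assms(4,6) by (intro order_stat_ratio_close)
    then show False using that(2) assms(5) by linarith
  qed
  then have "{\<omega>\<in>space M. \<epsilon> < \<bar>order_stat (\<lambda>k. X k \<omega>) K (K - n + 1) / order_stat (\<lambda>k. X k \<omega>) K K - 1\<bar>}
               \<subseteq> U \<union> V"
    by blast
  moreover have "U \<in> events" "V \<in> events"
    using borel_measurable_card_exceeding[of "{1..K}" X M b] meas
    unfolding U_def V_def by (auto simp: borel_measurable_iff_greater)
  ultimately have "prob {\<omega>\<in>space M. \<epsilon> < \<bar>order_stat (\<lambda>k. X k \<omega>) K (K - n + 1) / order_stat (\<lambda>k. X k \<omega>) K K - 1\<bar>}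
                    \<le> prob U + prob V"
    by (meson finite_measure_mono measure_Un_le order_trans sets.Un)
  also have "prob U \<le> real (card {1..K}) * prob {\<omega>\<in>space M. a < X 1 \<omega>}"
    unfolding U_def
  proof (rule prob_ex_gt_le)
    fix i :: nat assume "i \<in> {1..K}"
    then show "prob {\<omega>\<in>space M. a < X i \<omega>} = prob {\<omega>\<in>space M. a < X 1 \<omega>}"
      by (intro prob_gt_eq_if_distr_eq meas ident) auto
  qed (auto intro: meas)
  also have "prob V \<le> 2 * (2 * real m + 1) / real n"
    unfolding V_def using assms(6,7) by (intro prob_card_exceeding_less_le[OF meas ident mdep]) auto
  finally show ?thesis by simp
qed

lemma tendsto_prob_order_stat_ratio_far:
  fixes X :: "nat \<Rightarrow> 'a \<Rightarrow> real"
  assumes meas: "\<And>k. k \<ge> 1 \<Longrightarrow> X k \<in> borel_measurable M"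
    and ident: "\<And>k. k \<ge> 1 \<Longrightarrow> distr M borel (X k) = distr M borel (X 1)"
    and mdep: "m_dependent M m X"
    and unbounded: "\<And>x. 0 < prob {\<omega>\<in>space M. x < X 1 \<omega>}"
    and ab: "eventually (\<lambda>K. 0 < b K \<and> 1 - b K / a K \<le> \<epsilon>) sequentially"
    and a_lim: "((\<lambda>K. real K * prob {\<omega>\<in>space M. a K < X 1 \<omega>}) \<longlongrightarrow> 0) sequentially"
    and b_lim: "((\<lambda>K. real (n K) / (real K * prob {\<omega>\<in>space M. b K < X 1 \<omega>})) \<longlongrightarrow> 0) sequentially"
    and n_pos: "\<And>K. 0 < n K" and n_lim: "filterlim n at_top sequentially"
  shows "((\<lambda>K. prob {\<omega>\<in>space M.
            \<epsilon> < \<bar>order_stat (\<lambda>k. X k \<omega>) K (K - n K + 1) / order_stat (\<lambda>k. X k \<omega>) K K - 1\<bar>})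
          \<longlongrightarrow> 0) sequentially"
proof (rule tendsto_sandwich[OF always_eventually[OF measure_nonneg[THEN allI]] _ tendsto_const])
  have "eventually (\<lambda>K. real (n K) / (real K * prob {\<omega>\<in>space M. b K < X 1 \<omega>}) < 1 / 2) sequentially"
    by (rule order_tendstoD[OF b_lim]) simp
  then show "eventually (\<lambda>K. prob {\<omega>\<in>space M.
            \<epsilon> < \<bar>order_stat (\<lambda>k. X k \<omega>) K (K - n K + 1) / order_stat (\<lambda>k. X k \<omega>) K K - 1\<bar>}
          \<le> real K * prob {\<omega>\<in>space M. a K < X 1 \<omega>} + 2 * (2 * real m + 1) / real (n K)) sequentially"
    using ab eventually_ge_at_top[of 1]
  proof eventually_elim
    case (elim K)
    moreover have "0 < real K * prob {\<omega>\<in>space M. b K < X 1 \<omega>}"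
      using elim(3) unbounded by simp
    ultimately have "2 * real (n K) \<le> real K * prob {\<omega>\<in>space M. b K < X 1 \<omega>}"
      by (simp add: field_simps)
    moreover have "1 \<le> n K"
      using n_pos[of K] by simp
    ultimately show ?case
      using elim(2) by (intro prob_order_stat_ratio_far_le[OF meas ident mdep]) auto
  qed
  show "((\<lambda>K. real K * prob {\<omega>\<in>space M. a K < X 1 \<omega>} + 2 * (2 * real m + 1) / real (n K)) \<longlongrightarrow> 0)
          sequentially"
    using a_lim tendsto_divide_0[OF tendsto_const filterlim_at_top_imp_at_infinity
        [OF filterlim_compose[OF filterlim_real_sequentially n_lim]]]
    by (auto intro: tendsto_add_zero)
qed

end

theorem mainTheorem7:
  fixes M :: "'a measure" and X :: "nat \<Rightarrow> 'a \<Rightarrow> real" and m :: nat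
    and MK :: "nat \<Rightarrow> nat"
  assumes P: "prob_space M"
    and meas: "\<And>k. k \<ge> 1 \<Longrightarrow> X k \<in> borel_measurable M"
    and ident: "\<And>k. k \<ge> 1 \<Longrightarrow> distr M borel (X k) = distr M borel (X 1)"
    and unbounded: "\<And>x. measure M {\<omega> \<in> space M. X 1 \<omega> > x} > 0"
    and mdep: "m_dependent M m X"
    and cont: "continuous_on UNIV (\<lambda>x. measure M {\<omega> \<in> space M. X 1 \<omega> \<le> x})"
    and tail: "exp_dominated_tail (\<lambda>x. measure M {\<omega> \<in> space M. X 1 \<omega> \<le> x})"
    and MK_pos: "\<And>K. MK K > 0"
    and MK_inf: "filterlim MK at_top sequentially"
    and MK_small: "\<exists>\<mu>::real. \<mu> < 1 \<and>
                     ((\<lambda>K. real (MK K) / (ln (real K)) powr \<mu>) \<longlongrightarrow> 0) sequentially"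
  shows "\<forall>\<epsilon>>0. ((\<lambda>K. measure M {\<omega> \<in> space M.
            \<bar>order_stat (\<lambda>k. X k \<omega>) K (K - MK K + 1) / order_stat (\<lambda>k. X k \<omega>) K K - 1\<bar> > \<epsilon>})
          \<longlongrightarrow> 0) sequentially"
proof -
  interpret prob_space M by (rule P)
  have G_eq: "1 - prob {\<omega>\<in>space M. X 1 \<omega> \<le> x} = prob {\<omega>\<in>space M. x < X 1 \<omega>}" for x
    using meas[of 1] by (simp add: prob_gt_eq_1_minus_prob_le)
  obtain \<mu> where \<mu>: "((\<lambda>K. real (MK K) / ln (real K) powr \<mu>) \<longlongrightarrow> 0) sequentially"
    using MK_small by blast
  show ?thesis
  proof (intro allI impI)
    fix \<epsilon> :: real assume "0 < \<epsilon>"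
    define e where "e = min \<epsilon> (1 / 2)"
    have e: "0 < e" "e < 1" "e \<le> \<epsilon>"
      unfolding e_def using \<open>0 < \<epsilon>\<close> by auto
    obtain a b where ab: "\<And>K. 2 \<le> K \<Longrightarrow> 0 < b K \<and> b K / a K = 1 - e"
      and a_lim: "((\<lambda>K. real K * (1 - prob {\<omega>\<in>space M. X 1 \<omega> \<le> a K})) \<longlongrightarrow> 0) sequentially"
      and b_lim: "\<And>\<nu>. ((\<lambda>K. ln (real K) powr \<nu> / (real K * (1 - prob {\<omega>\<in>space M. X 1 \<omega> \<le> b K})))
                    \<longlongrightarrow> 0) sequentially"
      by (rule exp_dominated_tail_thresholds[OF tail e(1,2)]) (rule that)
    have "eventually (\<lambda>K. ln (real K) powr \<mu> \<noteq> 0) sequentially"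
      using eventually_ge_at_top[of 2] by eventually_elim simp
    then have "((\<lambda>K. real (MK K) / (real K * prob {\<omega>\<in>space M. b K < X 1 \<omega>})) \<longlongrightarrow> 0) sequentially"
      using tendsto_divide_0_trans[OF \<mu> b_lim[of \<mu>, unfolded G_eq]] by blast
    moreover have "eventually (\<lambda>K. 0 < b K \<and> 1 - b K / a K \<le> \<epsilon>) sequentially"
      using eventually_ge_at_top[of 2] by eventually_elim (use ab e in simp)
    ultimately show "((\<lambda>K. measure M {\<omega> \<in> space M.
            \<bar>order_stat (\<lambda>k. X k \<omega>) K (K - MK K + 1) / order_stat (\<lambda>k. X k \<omega>) K K - 1\<bar> > \<epsilon>})
          \<longlongrightarrow> 0) sequentially"
      using a_lim[unfolded G_eq] unbounded MK_pos MK_inf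
      by (intro tendsto_prob_order_stat_ratio_far[OF meas ident mdep]) auto
  qed
qed

end
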